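(* Let $d$, $N$, $n$ be positive integers with $d \geq 2$ and $N \geq 2$. Then there exists a strictly stationary, $N$-tuplewise independent random field $X := (X_k, k \in \mathbf{Z}^d)$ of real-valued random variables such that (i) $\rho^*(X,n) = 1$ and (ii) $\rho(X,1) = 1$ and $\rho(X,2) = 0$.
   Context: All random variables are defined on a common probability space $(\Omega,\mathcal{F},P)$. For $k\in\mathbf{Z}^d$, $k=(k_1,\dots,k_d)$ and $\|k\|$ is the Euclidean norm; for nonempty disjoint $S,T\subset\mathbf{Z}^d$, $\mathrm{dist}(S,T)=\min_{s\in S,t\in T}\|s-t\|$. A random field $X=(X_k,k\in\mathbf{Z}^d)$ satisfies $N$-tuplewise independence if for every choice of $N$ distinct $k(1),\dots,k(N)\in\mathbf{Z}^d$ the random variables $X_{k(1)},\dots,X_{k(N)}$ are independent. For $\sigma$-fields $\mathcal{A},\mathcal{B}\subset\mathcal{F}$: $\rho(\mathcal{A},\mathcal{B}) := \sup|\mathrm{Corr}(f,g)|$ over all square-integrable $f$ that are $\mathcal{A}$-measurable and $g$ that are $\mathcal{B}$-measurable. For a random field $X$ and $m\in\mathbf{N}$: $\rho(X,m)$ is the supremum of $\rho(\sigma(X_k,k\in S),\sigma(X_k,k\in T))$ over all pairs $S=\{k\in\mathbf{Z}^d:k_u\le j\}$, $T=\{k\in\mathbf{Z}^d:k_u\ge j+m\}$ with $j\in\mathbf{Z}$, $u\in\{1,\dots,d\}$; $\rho^*(X,m)$ is the same supremum over all nonempty disjoint $S,T\subset\mathbf{Z}^d$ with $\mathrm{dist}(S,T)\ge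 m$. *)

theory Defs
  imports "HOL-Probability.Probability"
begin

text \<open>Lattice points of Z^d are functions 'd \<Rightarrow> int for a finite type 'd with CARD('d) = d.\<close>

definition lat_norm :: "('d::finite \<Rightarrow> int) \<Rightarrow> real" where
  "lat_norm k = sqrt (\<Sum>u\<in>UNIV. (real_of_int (k u))\<^sup>2)"

definition lat_dist :: "('d::finite \<Rightarrow> int) set \<Rightarrow> ('d \<Rightarrow> int) set \<Rightarrow> real" where
  "lat_dist S T = Inf {lat_norm (\<lambda>u. s u - t u) | s t. s \<in> S \<and> t \<in> T}"

definition field_sigma :: "'a measure \<Rightarrow> ('i \<Rightarrow> 'a \<Rightarrow> real) \<Rightarrow> 'i set \<Rightarrow> 'a measure" where
  "field_sigma M X S = sigma (space M) {X k -` B \<inter> space M | k B. k \<in> S \<and> B \<in> sets borel}"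

definition covar :: "'a measure \<Rightarrow> ('a \<Rightarrow> real) \<Rightarrow> ('a \<Rightarrow> real) \<Rightarrow> real" where
  "covar M f g = (\<integral>x. (f x - (\<integral>y. f y \<partial>M)) * (g x - (\<integral>y. g y \<partial>M)) \<partial>M)"

definition corr :: "'a measure \<Rightarrow> ('a \<Rightarrow> real) \<Rightarrow> ('a \<Rightarrow> real) \<Rightarrow> real" where
  "corr M f g = covar M f g / sqrt (covar M f f * covar M g g)"

text \<open>Maximal correlation rho(A,B); pairs with a degenerate (zero-variance) variable
  contribute 0 (division by zero), and the empty supremum is taken to be 0.\<close>
definition max_corr :: "'a measure \<Rightarrow> 'a measure \<Rightarrow> 'a measure \<Rightarrow> real" where
  "max_corr M A B = Sup ({0} \<union> {\<bar>corr M f g\<bar> | f g.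
       f \<in> borel_measurable A \<and> g \<in> borel_measurable B \<and>
       integrable M (\<lambda>x. (f x)\<^sup>2) \<and> integrable M (\<lambda>x. (g x)\<^sup>2)})"

definition rho_half :: "'a measure \<Rightarrow> (('d::finite \<Rightarrow> int) \<Rightarrow> 'a \<Rightarrow> real) \<Rightarrow> nat \<Rightarrow> real" where
  "rho_half M X m = Sup {max_corr M (field_sigma M X {k. k u \<le> j}) (field_sigma M X {k. k u \<ge> j + int m})
      | j u. True}"

definition rho_star :: "'a measure \<Rightarrow> (('d::finite \<Rightarrow> int) \<Rightarrow> 'a \<Rightarrow> real) \<Rightarrow> nat \<Rightarrow> real" where
  "rho_star M X m = Sup {max_corr M (field_sigma M X S) (field_sigma M X T)
      | S T. S \<noteq> {} \<and> T \<noteq> {} \<and> S \<inter> T = {} \<and> lat_dist S T \<ge> real m}"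

definition strictly_stationary :: "'a measure \<Rightarrow> (('d::finite \<Rightarrow> int) \<Rightarrow> 'a \<Rightarrow> real) \<Rightarrow> bool" where
  "strictly_stationary M X \<longleftrightarrow> (\<forall>h.
     distr M (Pi\<^sub>M UNIV (\<lambda>_. borel)) (\<lambda>\<omega> k. X (\<lambda>u. k u + h u) \<omega>) =
     distr M (Pi\<^sub>M UNIV (\<lambda>_. borel)) (\<lambda>\<omega> k. X k \<omega>))"

definition tuplewise_indep :: "'a measure \<Rightarrow> nat \<Rightarrow> ('i \<Rightarrow> 'a \<Rightarrow> real) \<Rightarrow> bool" where
  "tuplewise_indep M N X \<longleftrightarrow>
     (\<forall>K. finite K \<and> card K = N \<longrightarrow> prob_space.indep_vars M (\<lambda>_. borel) X K)"

end

theory Submission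
  imports Defs "HOL-Library.Function_Algebras"
begin

text \<open>Attach to every lattice point \<open>h\<close> an independent uniformly random word of \<open>K = 2R + 1\<close>
  bits of even parity and spread it over the sites \<open>h + p 0, \<dots>, h + p (K - 1)\<close> of a fixed shape
  \<open>p\<close>; the value at a site records the bits landing there. Any \<open>K - 1\<close> bits of an even word are
  independent fair coins, so any \<open>N < K\<close> values of the field are independent, and so are the
  \<open>\<sigma>\<close>-fields of two half-spaces two apart: the coordinates along the shape have no gaps, so a
  block meeting both half-spaces also puts a bit in between. On the other hand the parity bit of
  the block at the origin is determined both by the value at the origin and by the values at
  \<open>p 1, \<dots>, p (K - 1)\<close>, which lie at distance at least \<open>R \<ge> n\<close> from the origin and in the
  half-space \<open>k\<^sub>a \<ge> 1\<close>; this common nontrivial event makes the maximal correlations equal to 1.\<close>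

section \<open>Maximal correlation\<close>

lemma space_field_sigma [simp]: "space (field_sigma M X S) = space M"
  unfolding field_sigma_def by (rule space_measure_of) auto

lemma sets_field_sigma:
  "sets (field_sigma M X S) = sigma_sets (space M) {X k -` B \<inter> space M | k B. k \<in> S \<and> B \<in> sets borel}"
  unfolding field_sigma_def by (subst sets_measure_of) auto

lemma measurable_field_sigma:
  assumes "k \<in> S"
  shows "X k \<in> borel_measurable (field_sigma M X S)"
proof (rule measurableI)
  fix B :: "real set" assume "B \<in> sets borel"
  then show "X k -` B \<inter> space (field_sigma M X S) \<in> sets (field_sigma M X S)"
    using assms unfolding sets_field_sigma by auto
qed auto

lemma subalgebra_field_sigma:
  assumes "\<And>k. k \<in> S \<Longrightarrow> X k \<in> borel_measurable M"
  shows "subalgebra M (field_sigma M X S)"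
  unfolding subalgebra_def
proof
  show "sets (field_sigma M X S) \<subseteq> sets M"
    unfolding sets_field_sigma using measurable_sets[OF assms]
    by (intro sets.sigma_sets_subset) auto
qed simp

lemma Cauchy_Schwarz_integral:
  fixes F G :: "'a \<Rightarrow> real"
  assumes [measurable]: "F \<in> borel_measurable M" "G \<in> borel_measurable M"
    and F2: "integrable M (\<lambda>x. (F x)\<^sup>2)" and G2: "integrable M (\<lambda>x. (G x)\<^sup>2)"
  shows "(\<integral>x. F x * G x \<partial>M)\<^sup>2 \<le> (\<integral>x. (F x)\<^sup>2 \<partial>M) * (\<integral>x. (G x)\<^sup>2 \<partial>M)"
proof -
  define A where "A = (\<integral>x. (F x)\<^sup>2 \<partial>M)"
  define B where "B = (\<integral>x. (G x)\<^sup>2 \<partial>M)"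
  define C where "C = (\<integral>x. F x * G x \<partial>M)"
  have FG: "integrable M (\<lambda>x. F x * G x)"
  proof (rule Bochner_Integration.integrable_bound)
    show "integrable M (\<lambda>x. (F x)\<^sup>2 + (G x)\<^sup>2)" using F2 G2 by simp
    have "2 * \<bar>F x * G x\<bar> \<le> (F x)\<^sup>2 + (G x)\<^sup>2" for x
      using sum_squares_bound[of "\<bar>F x\<bar>" "\<bar>G x\<bar>"] by (simp add: abs_mult)
    then show "AE x in M. norm (F x * G x) \<le> norm ((F x)\<^sup>2 + (G x)\<^sup>2)"
      by (intro AE_I2) (smt (verit) real_norm_def zero_le_power2)
  qed simp
  have quadratic: "0 \<le> t\<^sup>2 * A - 2 * t * C + B" for t :: real
  proof -
    have "0 \<le> (\<integral>x. (t * F x - G x)\<^sup>2 \<partial>M)" by simp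
    also have "(\<lambda>x. (t * F x - G x)\<^sup>2) = (\<lambda>x. t\<^sup>2 * (F x)\<^sup>2 - 2 * t * (F x * G x) + (G x)\<^sup>2)"
      by (simp add: fun_eq_iff power2_eq_square algebra_simps)
    also have "(\<integral>x. t\<^sup>2 * (F x)\<^sup>2 - 2 * t * (F x * G x) + (G x)\<^sup>2 \<partial>M) = t\<^sup>2 * A - 2 * t * C + B"
      using F2 G2 FG by (simp add: A_def B_def C_def)
    finally show ?thesis .
  qed
  have "C\<^sup>2 \<le> A * B"
  proof (cases "A = 0")
    case True
    then have "C = 0" using quadratic[of "(B + 1) / (2 * C)"] by (cases "C = 0") auto
    then show ?thesis using True by simp
  next
    case False
    moreover have "0 \<le> A" unfolding A_def by simp
    ultimately have "0 < A" by simp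
    moreover have "0 \<le> (C / A)\<^sup>2 * A - 2 * (C / A) * C + B" by (rule quadratic)
    ultimately show ?thesis by (simp add: power2_eq_square field_simps)
  qed
  then show ?thesis by (simp add: A_def B_def C_def)
qed

lemma (in prob_space) covar_square_le:
  fixes f g :: "'a \<Rightarrow> real"
  assumes [measurable]: "f \<in> borel_measurable M" "g \<in> borel_measurable M"
    and f2: "integrable M (\<lambda>x. (f x)\<^sup>2)" and g2: "integrable M (\<lambda>x. (g x)\<^sup>2)"
  shows "(covar M f g)\<^sup>2 \<le> covar M f f * covar M g g"
proof -
  have centered_square: "integrable M (\<lambda>x. (h x - c)\<^sup>2)"
    if [measurable]: "h \<in> borel_measurable M" and h2: "integrable M (\<lambda>x. (h x)\<^sup>2)" for h :: "'a \<Rightarrow> real" and c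
  proof -
    have "integrable M h" using h2 by (rule square_integrable_imp_integrable[rotated]) simp
    moreover have "(\<lambda>x. (h x - c)\<^sup>2) = (\<lambda>x. (h x)\<^sup>2 - 2 * c * h x + c\<^sup>2)"
      by (simp add: fun_eq_iff power2_eq_square algebra_simps)
    ultimately show ?thesis using h2 by simp
  qed
  show ?thesis
    using Cauchy_Schwarz_integral[of "\<lambda>x. f x - (\<integral>y. f y \<partial>M)" M "\<lambda>x. g x - (\<integral>y. g y \<partial>M)"]
      centered_square[OF assms(1) f2] centered_square[OF assms(2) g2]
    by (simp add: covar_def power2_eq_square)
qed

lemma (in prob_space) abs_corr_le_1:
  fixes f g :: "'a \<Rightarrow> real"
  assumes "f \<in> borel_measurable M" "g \<in> borel_measurable M"
    and "integrable M (\<lambda>x. (f x)\<^sup>2)" "integrable M (\<lambda>x. (g x)\<^sup>2)"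
  shows "\<bar>corr M f g\<bar> \<le> 1"
proof (cases "covar M f f * covar M g g = 0")
  case True
  then show ?thesis unfolding corr_def True by simp
next
  case False
  have "0 \<le> covar M f f" "0 \<le> covar M g g" by (simp_all add: covar_def)
  then have "0 < sqrt (covar M f f * covar M g g)" using False by (simp add: less_le)
  moreover have "\<bar>covar M f g\<bar> \<le> sqrt (covar M f f * covar M g g)"
    using real_sqrt_le_mono[OF covar_square_le[OF assms]] by simp
  ultimately show ?thesis by (simp add: corr_def abs_divide)
qed

lemma max_corr_candidate_le_1:
  assumes "prob_space M" and A: "subalgebra M A" and B: "subalgebra M B"
    and "x \<in> {0} \<union> {\<bar>corr M f g\<bar> | f g. f \<in> borel_measurable A \<and> g \<in> borel_measurable B \<and>
       integrable M (\<lambda>x. (f x)\<^sup>2) \<and> integrable M (\<lambda>x. (g x)\<^sup>2)}"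
  shows "x \<le> 1"
  using assms(4) prob_space.abs_corr_le_1[OF assms(1) measurable_from_subalg[OF A] measurable_from_subalg[OF B]]
  by auto

lemma max_corr_le_1:
  assumes "prob_space M" "subalgebra M A" "subalgebra M B"
  shows "max_corr M A B \<le> 1"
  unfolding max_corr_def by (rule cSup_least) (auto intro: max_corr_candidate_le_1[OF assms])

lemma abs_corr_le_max_corr:
  assumes "prob_space M" "subalgebra M A" "subalgebra M B"
    and "f \<in> borel_measurable A" "g \<in> borel_measurable B"
    and "integrable M (\<lambda>x. (f x)\<^sup>2)" "integrable M (\<lambda>x. (g x)\<^sup>2)"
  shows "\<bar>corr M f g\<bar> \<le> max_corr M A B"
  unfolding max_corr_def
proof (rule cSup_upper)
  show "bdd_above ({0} \<union> {\<bar>corr M f g\<bar> | f g. f \<in> borel_measurable A \<and> g \<in> borel_measurable B \<and>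
       integrable M (\<lambda>x. (f x)\<^sup>2) \<and> integrable M (\<lambda>x. (g x)\<^sup>2)})"
    by (rule bdd_aboveI[where M=1]) (rule max_corr_candidate_le_1[OF assms(1-3)])
qed (use assms(4-7) in blast)

lemma (in prob_space) covar_indicator_self:
  assumes "E \<in> events"
  shows "covar M (indicator E) (indicator E) = prob E * (1 - prob E)"
proof -
  have "(\<lambda>x. (indicator E x - prob E) * (indicator E x - prob E)) =
      (\<lambda>x. (1 - 2 * prob E) * indicator E x + (prob E)\<^sup>2 :: real)"
    by (auto simp: fun_eq_iff indicator_def power2_eq_square algebra_simps)
  moreover have "integrable M (indicator E :: 'a \<Rightarrow> real)"
    by (rule integrable_real_indicator[OF assms]) (simp add: less_top[symmetric])
  ultimately show ?thesis
    using assms by (simp add: covar_def power2_eq_square algebra_simps prob_space)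
qed

lemma max_corr_eq_1_if_common_event:
  assumes P: "prob_space M" and A: "subalgebra M A" and B: "subalgebra M B"
    and E: "E \<in> sets A" "E \<in> sets B" and nontrivial: "0 < measure M E" "measure M E < 1"
  shows "max_corr M A B = 1"
proof (rule antisym)
  interpret prob_space M by (rule P)
  let ?f = "indicator E :: 'a \<Rightarrow> real"
  have "E \<in> events" using A E(1) by (auto simp: subalgebra_def)
  then have "0 < covar M ?f ?f" using nontrivial by (simp add: covar_indicator_self)
  then have "corr M ?f ?f = 1" by (simp add: corr_def real_sqrt_mult_self)
  moreover have "integrable M (\<lambda>x. (?f x)\<^sup>2)"
    by (rule integrable_const_bound[where B=1]) (use \<open>E \<in> events\<close> in \<open>auto simp: indicator_def\<close>)
  ultimately show "1 \<le> max_corr M A B"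
    using abs_corr_le_max_corr[OF P A B, of ?f ?f] E by simp
qed (rule max_corr_le_1[OF P A B])

lemma (in prob_space) indep_vars_if_indep_sets:
  assumes indep: "indep_sets (\<lambda>j. sets (A j)) J"
    and sub: "\<And>j. j \<in> J \<Longrightarrow> subalgebra M (A j)"
    and Y: "\<And>j. j \<in> J \<Longrightarrow> Y j \<in> borel_measurable (A j)"
  shows "indep_vars (\<lambda>_. borel) Y J"
  unfolding indep_vars_def2
proof
  show "\<forall>j\<in>J. random_variable borel (Y j)"
    using Y sub by (blast intro: measurable_from_subalg)
  show "indep_sets (\<lambda>j. {Y j -` B \<inter> space M | B. B \<in> sets borel}) J"
  proof (rule indep_sets_mono_sets[OF indep])
    fix j assume j: "j \<in> J"
    have "space (A j) = space M" using sub[OF j] by (simp add: subalgebra_def)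
    then show "{Y j -` B \<inter> space M | B. B \<in> sets borel} \<subseteq> sets (A j)"
      using measurable_sets[OF Y[OF j]] by auto
  qed
qed

lemma (in prob_space) covar_eq_0_if_indep_var:
  fixes f g :: "'a \<Rightarrow> real"
  assumes indep: "indep_var borel f borel g" and f: "integrable M f" and g: "integrable M g"
  shows "covar M f g = 0"
proof -
  define a where "a = (\<integral>x. f x \<partial>M)"
  define b where "b = (\<integral>x. g x \<partial>M)"
  have "indep_var borel ((\<lambda>x. x - a) \<circ> f) borel ((\<lambda>x. x - b) \<circ> g)"
    by (rule indep_var_compose[OF indep]) auto
  then have "covar M f g = (\<integral>x. f x - a \<partial>M) * (\<integral>x. g x - b \<partial>M)"
    unfolding covar_def a_def[symmetric] b_def[symmetric] o_def
    using f g by (intro indep_var_lebesgue_integral) auto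
  also have "(\<integral>x. f x - a \<partial>M) = 0"
    using f by (simp add: a_def prob_space)
  finally show ?thesis by simp
qed

lemma max_corr_eq_0_if_indep:
  assumes P: "prob_space M" and A: "subalgebra M A" and B: "subalgebra M B"
    and indep: "prob_space.indep_set M (sets A) (sets B)"
  shows "max_corr M A B = 0"
proof -
  interpret prob_space M by (rule P)
  have "corr M f g = 0"
    if f: "f \<in> borel_measurable A" and g: "g \<in> borel_measurable B"
      and f2: "integrable M (\<lambda>x. (f x)\<^sup>2)" and g2: "integrable M (\<lambda>x. (g x)\<^sup>2)" for f g
  proof -
    have "(\<lambda>j. sets (case_bool A B j)) = case_bool (sets A) (sets B)"
      by (simp add: fun_eq_iff split: bool.split)
    then have "indep_vars (\<lambda>_. borel) (case_bool f g) UNIV"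
      using indep A B f g
      by (intro indep_vars_if_indep_sets[where A="case_bool A B"]) (auto simp: indep_set_def split: bool.split)
    moreover have "case_bool borel borel = (\<lambda>_. borel :: real measure)"
      by (simp add: fun_eq_iff split: bool.split)
    ultimately have "indep_var borel f borel g"
      unfolding indep_var_def by simp
    moreover have "integrable M f" "integrable M g"
      using f2 g2 measurable_from_subalg[OF A f] measurable_from_subalg[OF B g]
      by (auto intro: square_integrable_imp_integrable)
    ultimately show ?thesis by (simp add: covar_eq_0_if_indep_var corr_def)
  qed
  then have "{0} \<union> {\<bar>corr M f g\<bar> | f g. f \<in> borel_measurable A \<and> g \<in> borel_measurable B \<and>
       integrable M (\<lambda>x. (f x)\<^sup>2) \<and> integrable M (\<lambda>x. (g x)\<^sup>2)} = {0}"
    by auto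
  then show ?thesis unfolding max_corr_def by (simp only: cSup_singleton)
qed

section \<open>Words of even parity\<close>

definition real_of_bits :: "nat \<Rightarrow> (nat \<Rightarrow> bool) \<Rightarrow> real" where
  "real_of_bits K v = (\<Sum>i<K. if v i then 2 ^ i else 0)"

definition real_bit :: "nat \<Rightarrow> real \<Rightarrow> bool" where
  "real_bit i x \<longleftrightarrow> bit (nat \<lfloor>x\<rfloor>) i"

lemma real_bit_real_of_bits: "real_bit j (real_of_bits K v) \<longleftrightarrow> j < K \<and> v j"
proof -
  have "real_of_bits K v = real (horner_sum of_bool 2 (map v [0..<K]) :: nat)"
    by (simp add: real_of_bits_def horner_sum_eq_sum atLeast0LessThan of_bool_def)
      (intro sum.cong; simp)
  then show ?thesis
    unfolding real_bit_def by (simp only: floor_of_nat nat_int bit_horner_sum_bit_iff) auto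
qed

lemma measurable_real_bit [measurable]: "real_bit i \<in> measurable borel (count_space UNIV)"
proof -
  have "(\<lambda>z::int. bit (nat z) i) \<in> measurable (count_space UNIV) (count_space UNIV)" by simp
  from measurable_compose[OF measurable_real_floor this] show ?thesis
    by (simp add: real_bit_def[abs_def])
qed

lemma pred_odd_card:
  assumes "finite A" and "\<And>j. j \<in> A \<Longrightarrow> Measurable.pred M (P j)"
  shows "Measurable.pred M (\<lambda>x. odd (card {j \<in> A. P j x}))"
  using assms
proof (induction A rule: finite_induct)
  case (insert a A)
  have "odd (card {j \<in> insert a A. P j x}) \<longleftrightarrow> (odd (card {j \<in> A. P j x}) \<noteq> P a x)" for x
  proof -
    have "{j \<in> insert a A. P j x} = (if P a x then insert a {j \<in> A. P j x} else {j \<in> A. P j x})"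
      by auto
    then show ?thesis using insert.hyps by auto
  qed
  moreover have "Measurable.pred M (\<lambda>x. odd (card {j \<in> A. P j x}) \<noteq> P a x)"
    using insert.IH insert.prems by measurable
  ultimately show ?case by simp
qed simp

definition even_words :: "nat \<Rightarrow> (nat \<Rightarrow> bool) set" where
  "even_words K = {v. (\<forall>i\<ge>K. \<not> v i) \<and> even (card {i. i < K \<and> v i})}"

definition even_word_pmf :: "nat \<Rightarrow> (nat \<Rightarrow> bool) pmf" where
  "even_word_pmf K = pmf_of_set (even_words K)"

lemma finite_even_words: "finite (even_words K)"
proof (rule finite_subset)
  show "even_words K \<subseteq> PiE_dflt {..<K} False (\<lambda>_. UNIV)"
    by (auto simp: even_words_def PiE_dflt_def not_less)
qed (intro finite_PiE_dflt; simp)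

lemma even_words_nonempty: "even_words K \<noteq> {}"
proof -
  have "(\<lambda>_. False) \<in> even_words K" by (simp add: even_words_def)
  then show ?thesis by blast
qed

lemma set_pmf_even_word_pmf: "set_pmf (even_word_pmf K) = even_words K"
  by (simp add: even_word_pmf_def finite_even_words even_words_nonempty)

lemma card_bits_split:
  fixes m K :: nat
  assumes "m < K"
  shows "card {i. i < K \<and> v i} = card {i. i < K \<and> i \<noteq> m \<and> v i} + of_bool (v m)"
proof (cases "v m")
  case True
  have "{i. i < K \<and> v i} = insert m {i. i < K \<and> i \<noteq> m \<and> v i}" using True assms by auto
  moreover have "finite {i. i < K \<and> i \<noteq> m \<and> v i}" by (rule finite_subset[of _ "{..<K}"]) auto
  ultimately show ?thesis using True by simp
next
  case False
  then have "{i. i < K \<and> v i} = {i. i < K \<and> i \<noteq> m \<and> v i}" by auto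
  then show ?thesis using False by simp
qed

text \<open>Forgetting one bit of an even word loses no information: the parity constraint
  restores it.\<close>

lemma map_pmf_even_word_pmf_forget:
  assumes m: "m < K"
  shows "map_pmf (\<lambda>v. v(m := False)) (even_word_pmf K) = Pi_pmf ({..<K} - {m}) False (\<lambda>_. pmf_of_set UNIV)"
proof -
  define forget where "forget v = v(m := False)" for v :: "nat \<Rightarrow> bool"
  have "inj_on forget (even_words K)"
  proof (rule inj_onI)
    fix v w assume v: "v \<in> even_words K" and w: "w \<in> even_words K" and e: "forget v = forget w"
    have others: "\<And>i. i \<noteq> m \<Longrightarrow> v i = w i" using e unfolding forget_def by (metis fun_upd_other)
    then have "{i. i < K \<and> i \<noteq> m \<and> v i} = {i. i < K \<and> i \<noteq> m \<and> w i}" by auto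
    then have "v m = w m"
      using v w card_bits_split[OF m, of v] card_bits_split[OF m, of w] by (auto simp: even_words_def)
    then show "v = w" using others by (intro ext) metis
  qed
  moreover have "forget ` even_words K = PiE_dflt ({..<K} - {m}) False (\<lambda>_. UNIV)"
  proof
    show "forget ` even_words K \<subseteq> PiE_dflt ({..<K} - {m}) False (\<lambda>_. UNIV)"
      by (auto simp: forget_def PiE_dflt_def even_words_def not_less split: if_splits)
  next
    show "PiE_dflt ({..<K} - {m}) False (\<lambda>_. UNIV) \<subseteq> forget ` even_words K"
    proof
      fix w assume w: "w \<in> PiE_dflt ({..<K} - {m}) False (\<lambda>_. UNIV)"
      define v where "v = w(m := odd (card {i. i < K \<and> w i}))"
      have wm: "\<not> w m" and wK: "\<And>i. K \<le> i \<Longrightarrow> \<not> w i" using w by (auto simp: PiE_dflt_def)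
      have "{i. i < K \<and> i \<noteq> m \<and> v i} = {i. i < K \<and> w i}" using wm by (auto simp: v_def)
      then have "even (card {i. i < K \<and> v i})"
        using card_bits_split[OF m, of v] by (simp add: v_def)
      then have "v \<in> even_words K" using wK m by (auto simp: even_words_def v_def)
      moreover have "forget v = w" using wm by (auto simp: forget_def v_def fun_upd_idem)
      ultimately show "w \<in> forget ` even_words K" by blast
    qed
  qed
  ultimately show ?thesis
    unfolding even_word_pmf_def forget_def[symmetric]
    by (simp add: map_pmf_of_set_inj even_words_nonempty finite_even_words Pi_pmf_of_set)
qed

lemma prob_even_word_pmf_bits:
  assumes U: "U \<subseteq> {..<K}" and m: "m < K" "m \<notin> U"
  shows "measure_pmf.prob (even_word_pmf K) {v. \<forall>i\<in>U. v i \<in> S i} = (\<Prod>i\<in>U. real (card (S i)) / 2)"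
proof -
  define A where "A = {..<K} - {m}"
  have "measure_pmf.prob (even_word_pmf K) {v. \<forall>i\<in>U. v i \<in> S i} =
        measure_pmf.prob (even_word_pmf K) ((\<lambda>v. v(m := False)) -` Pi A (\<lambda>i. if i \<in> U then S i else UNIV))"
    using U m by (intro arg_cong[where f="measure_pmf.prob _"]) (auto simp: A_def Pi_def)
  also have "\<dots> = measure_pmf.prob (Pi_pmf A False (\<lambda>_. pmf_of_set UNIV)) (Pi A (\<lambda>i. if i \<in> U then S i else UNIV))"
    by (simp flip: map_pmf_even_word_pmf_forget[OF m(1)] add: A_def)
  also have "\<dots> = (\<Prod>i\<in>A. if i \<in> U then real (card (S i)) / 2 else 1)"
    by (simp add: measure_Pi_pmf_Pi A_def measure_pmf_of_set if_distrib cong: if_cong)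
  also have "\<dots> = (\<Prod>i\<in>U. real (card (S i)) / 2)"
    using U m by (subst prod.If_cases) (auto simp: A_def intro!: arg_cong2[where f="(*)"] prod.cong)
  finally show ?thesis .
qed

text \<open>Bit 0 is read off as the parity of the other bits rather than stored, so that the parity
  relation between the bits of a block holds at every sample point, not only almost surely.\<close>

definition block_bit :: "nat \<Rightarrow> nat \<Rightarrow> real \<Rightarrow> bool" where
  "block_bit K i x = (if i = 0 then odd (card {j. 1 \<le> j \<and> j < K \<and> real_bit j x}) else real_bit i x)"

lemma block_bit_real_of_bits:
  assumes v: "v \<in> even_words K" and i: "i < K"
  shows "block_bit K i (real_of_bits K v) = v i"
proof (cases "i = 0")
  case True
  have "{j. 1 \<le> j \<and> j < K \<and> real_bit j (real_of_bits K v)} = {j. j < K \<and> j \<noteq> 0 \<and> v j}"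
    by (auto simp: real_bit_real_of_bits)
  moreover have "even (card {j. j < K \<and> v j})" using v by (simp add: even_words_def)
  ultimately show ?thesis using card_bits_split[OF i, of v] True by (auto simp: block_bit_def)
next
  case False
  then show ?thesis using i by (simp add: block_bit_def real_bit_real_of_bits)
qed

section \<open>The block field\<close>

definition block_dist :: "nat \<Rightarrow> real measure" where
  "block_dist K = measure_pmf (map_pmf (real_of_bits K) (even_word_pmf K))"

lemma prob_space_block_dist: "prob_space (block_dist K)"
  by (simp add: block_dist_def measure_pmf.prob_space_axioms)

lemma sets_block_dist [simp]: "sets (block_dist K) = UNIV"
  and space_block_dist [simp]: "space (block_dist K) = UNIV"
  by (simp_all add: block_dist_def)

lemma measure_block_dist_bits:
  assumes "U \<subseteq> {..<K}"
  shows "measure (block_dist K) {x. \<forall>i\<in>U. block_bit K i x \<in> T i} =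
    measure_pmf.prob (even_word_pmf K) {v. \<forall>i\<in>U. v i \<in> T i}"
proof -
  let ?p = "even_word_pmf K"
  have "block_bit K i (real_of_bits K v) = v i" if "v \<in> even_words K" "i \<in> U" for v i
    using assms that by (metis block_bit_real_of_bits lessThan_iff subsetD)
  then have eq: "real_of_bits K -` {x. \<forall>i\<in>U. block_bit K i x \<in> T i} \<inter> set_pmf ?p =
      {v. \<forall>i\<in>U. v i \<in> T i} \<inter> set_pmf ?p"
    by (auto simp: set_pmf_even_word_pmf)
  have "measure (block_dist K) {x. \<forall>i\<in>U. block_bit K i x \<in> T i} =
      measure_pmf.prob ?p (real_of_bits K -` {x. \<forall>i\<in>U. block_bit K i x \<in> T i} \<inter> set_pmf ?p)"
    by (simp add: block_dist_def measure_Int_set_pmf)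
  also have "\<dots> = measure_pmf.prob ?p {v. \<forall>i\<in>U. v i \<in> T i}"
    unfolding eq by (rule measure_Int_set_pmf)
  finally show ?thesis .
qed

definition block_field :: "nat \<Rightarrow> ('g \<Rightarrow> real) measure" where
  "block_field K = PiM UNIV (\<lambda>_. block_dist K)"

interpretation block_product: product_prob_space "\<lambda>_::'g. block_dist K" UNIV for K
  by (intro product_prob_spaceI prob_space_block_dist)

lemma prob_space_block_field: "prob_space (block_field K)"
  unfolding block_field_def by (rule block_product.P.prob_space_axioms)

lemma space_block_field [simp]: "space (block_field K) = UNIV"
  by (simp add: block_field_def space_PiM)

definition site_bit :: "nat \<Rightarrow> (nat \<Rightarrow> 'g::ab_group_add) \<Rightarrow> nat \<Rightarrow> 'g \<Rightarrow> ('g \<Rightarrow> real) \<Rightarrow> bool" where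
  "site_bit K p i m \<omega> = block_bit K i (\<omega> (m - p i))"

definition spread_field :: "nat \<Rightarrow> (nat \<Rightarrow> 'g::ab_group_add) \<Rightarrow> 'g \<Rightarrow> ('g \<Rightarrow> real) \<Rightarrow> real" where
  "spread_field K p m \<omega> = real_of_bits K (\<lambda>i. site_bit K p i m \<omega>)"

abbreviation spread_sigma :: "nat \<Rightarrow> (nat \<Rightarrow> 'g::ab_group_add) \<Rightarrow> 'g set \<Rightarrow> ('g \<Rightarrow> real) measure" where
  "spread_sigma K p S \<equiv> field_sigma (block_field K) (spread_field K p) S"

lemma measurable_site_bit [measurable]:
  "site_bit K p i m \<in> measurable (block_field K) (count_space UNIV)"
proof -
  have "(\<lambda>\<omega>. \<omega> (m - p i)) \<in> measurable (block_field K) (block_dist K)"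
    unfolding block_field_def by (rule measurable_component_singleton) simp
  moreover have "block_bit K i \<in> measurable (block_dist K) (count_space UNIV)"
    by (simp add: block_dist_def)
  ultimately show ?thesis
    unfolding site_bit_def[abs_def] by (rule measurable_compose[where f="\<lambda>\<omega>. \<omega> _"])
qed

lemma measurable_spread_field [measurable]: "spread_field K p m \<in> borel_measurable (block_field K)"
  unfolding spread_field_def[abs_def] real_of_bits_def by measurable

lemma distr_block_field_shift:
  fixes h :: "'g::ab_group_add"
  shows "distr (block_field K) (block_field K) (\<lambda>\<omega> m. \<omega> (m + h)) = block_field K"
proof -
  have "distr (PiM UNIV (\<lambda>_. block_dist K)) (PiM UNIV (\<lambda>_. block_dist K)) (\<lambda>\<omega>. \<lambda>m\<in>UNIV. \<omega> (m + h)) =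
      PiM UNIV (\<lambda>_::'g. block_dist K)"
    using distr_PiM_reindex[of UNIV "\<lambda>_. block_dist K" "\<lambda>m. m + h" UNIV] prob_space_block_dist by simp
  then show ?thesis by (simp add: block_field_def restrict_def)
qed

lemma strictly_stationary_spread_field:
  fixes p :: "nat \<Rightarrow> 'd::finite \<Rightarrow> int"
  shows "strictly_stationary (block_field K) (spread_field K p)"
  unfolding strictly_stationary_def
proof
  fix h :: "'d \<Rightarrow> int"
  let ?shift = "\<lambda>\<omega> m. \<omega> (m + h)"
  let ?X = "\<lambda>\<omega> k. spread_field K p k \<omega>"
  have shift: "?shift \<in> measurable (block_field K) (block_field K)"
    unfolding block_field_def
    by (rule measurable_PiM_single') (auto simp: space_PiM intro: measurable_component_singleton)
  have X: "?X \<in> measurable (block_field K) (PiM UNIV (\<lambda>_. borel))"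
    by (rule measurable_PiM_single') (auto simp: space_PiM)
  have "spread_field K p (k + h) \<omega> = spread_field K p k (?shift \<omega>)" for k \<omega>
    by (simp add: spread_field_def site_bit_def diff_add_eq)
  then have "(\<lambda>\<omega> k. spread_field K p (\<lambda>u. k u + h u) \<omega>) = ?X \<circ> ?shift"
    by (simp add: fun_eq_iff plus_fun_def)
  then show "distr (block_field K) (PiM UNIV (\<lambda>_. borel)) (\<lambda>\<omega> k. spread_field K p (\<lambda>u. k u + h u) \<omega>) =
      distr (block_field K) (PiM UNIV (\<lambda>_. borel)) ?X"
    using distr_distr[OF X shift] by (simp add: distr_block_field_shift)
qed

section \<open>Independence of bits in separated sets of sites\<close>

definition bit_event ::
    "nat \<Rightarrow> (nat \<Rightarrow> 'g::ab_group_add) \<Rightarrow> (nat \<times> 'g) set \<Rightarrow> (nat \<times> 'g \<Rightarrow> bool set) \<Rightarrow> ('g \<Rightarrow> real) set"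
  where "bit_event K p F S = {\<omega>. \<forall>(i, m)\<in>F. site_bit K p i m \<omega> \<in> S (i, m)}"

lemma sets_bit_event:
  assumes "finite F"
  shows "bit_event K p F S \<in> sets (block_field K)"
proof (cases "F = {}")
  case True
  then show ?thesis using sets.top[of "block_field K"] by (simp add: bit_event_def)
next
  case False
  then have "bit_event K p F S = (\<Inter>(i, m)\<in>F. site_bit K p i m -` S (i, m) \<inter> space (block_field K))"
    by (auto simp: bit_event_def)
  also have "\<dots> \<in> sets (block_field K)"
    using assms False measurable_sets[OF measurable_site_bit, of _ K p] by (intro sets.finite_INT) auto
  finally show ?thesis .
qed

definition block_positions :: "(nat \<Rightarrow> 'g::ab_group_add) \<Rightarrow> (nat \<times> 'g) set \<Rightarrow> 'g \<Rightarrow> nat set" where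
  "block_positions p F h = {i. (i, h + p i) \<in> F}"

definition block_factor ::
    "nat \<Rightarrow> (nat \<Rightarrow> 'g::ab_group_add) \<Rightarrow> (nat \<times> 'g) set \<Rightarrow> (nat \<times> 'g \<Rightarrow> bool set) \<Rightarrow> 'g \<Rightarrow> real"
  where "block_factor K p F S h =
    measure_pmf.prob (even_word_pmf K) {v. \<forall>i\<in>block_positions p F h. v i \<in> S (i, h + p i)}"

lemma measure_bit_event:
  assumes H: "finite H" and F: "F \<subseteq> {..<K} \<times> UNIV" and FH: "\<And>i m. (i, m) \<in> F \<Longrightarrow> m - p i \<in> H"
  shows "measure (block_field K) (bit_event K p F S) = (\<Prod>h\<in>H. block_factor K p F S h)"
proof -
  define A where "A h = {x. \<forall>i\<in>block_positions p F h. block_bit K i x \<in> S (i, h + p i)}" for h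
  have "bit_event K p F S = prod_emb UNIV (\<lambda>_. block_dist K) H (PiE H A)"
  proof (intro set_eqI iffI)
    fix \<omega> assume "\<omega> \<in> bit_event K p F S"
    then have "\<omega> h \<in> A h" for h
      by (auto simp: A_def block_positions_def bit_event_def site_bit_def)
    then show "\<omega> \<in> prod_emb UNIV (\<lambda>_. block_dist K) H (PiE H A)"
      by (auto simp: prod_emb_def PiE_iff)
  next
    fix \<omega> assume \<omega>: "\<omega> \<in> prod_emb UNIV (\<lambda>_. block_dist K) H (PiE H A)"
    show "\<omega> \<in> bit_event K p F S"
      unfolding bit_event_def
    proof (intro CollectI ballI, clarify)
      fix i m assume im: "(i, m) \<in> F"
      then have "i \<in> block_positions p F (m - p i)" by (simp add: block_positions_def)
      moreover have "\<omega> (m - p i) \<in> A (m - p i)" using \<omega> FH[OF im] by (auto simp: prod_emb_def)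
      ultimately show "site_bit K p i m \<omega> \<in> S (i, m)" by (auto simp: A_def site_bit_def)
    qed
  qed
  then have "measure (block_field K) (bit_event K p F S) = (\<Prod>h\<in>H. measure (block_dist K) (A h))"
    unfolding block_field_def using block_product.measure_PiM_emb[of H A K] H by simp
  also have "\<dots> = (\<Prod>h\<in>H. block_factor K p F S h)"
    unfolding A_def block_factor_def
    using F by (intro prod.cong refl measure_block_dist_bits) (auto simp: block_positions_def)
  finally show ?thesis .
qed

definition bit_events :: "nat \<Rightarrow> (nat \<Rightarrow> 'g::ab_group_add) \<Rightarrow> 'g set \<Rightarrow> ('g \<Rightarrow> real) set set" where
  "bit_events K p L = {bit_event K p F S | F S. finite F \<and> F \<subseteq> {..<K} \<times> L}"

lemma bit_events_subset_sets: "bit_events K p L \<subseteq> sets (block_field K)"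
  by (auto simp: bit_events_def intro: sets_bit_event)

lemma Int_stable_bit_events: "Int_stable (bit_events K p L)"
proof (rule Int_stableI)
  fix a b assume "a \<in> bit_events K p L" "b \<in> bit_events K p L"
  then obtain F S F' S' where ab: "a = bit_event K p F S" "b = bit_event K p F' S'"
    and F: "finite F" "F \<subseteq> {..<K} \<times> L" "finite F'" "F' \<subseteq> {..<K} \<times> L"
    unfolding bit_events_def by blast
  define T where "T x = (if x \<in> F then S x else UNIV) \<inter> (if x \<in> F' then S' x else UNIV)" for x
  have "a \<inter> b = bit_event K p (F \<union> F') T"
    unfolding ab T_def by (auto simp: bit_event_def)
  then show "a \<inter> b \<in> bit_events K p L"
    using F unfolding bit_events_def by blast
qed

definition blocks_separate :: "nat \<Rightarrow> (nat \<Rightarrow> 'g::ab_group_add) \<Rightarrow> ('j \<Rightarrow> 'g set) \<Rightarrow> 'j set \<Rightarrow> bool" where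
  "blocks_separate K p L J \<longleftrightarrow> (\<forall>h j j' i i'. j \<in> J \<longrightarrow> j' \<in> J \<longrightarrow> j \<noteq> j' \<longrightarrow> i < K \<longrightarrow> i' < K \<longrightarrow>
     h + p i \<in> L j \<longrightarrow> h + p i' \<in> L j' \<longrightarrow> (\<exists>m<K. h + p m \<notin> (\<Union>j\<in>J. L j)))"

lemma blocks_separate_subset:
  assumes "blocks_separate K p L J" and "J' \<subseteq> J"
  shows "blocks_separate K p L J'"
  unfolding blocks_separate_def
proof (intro allI impI)
  fix h j j' i i' assume "j \<in> J'" "j' \<in> J'" "j \<noteq> j'" "i < K" "i' < K" "h + p i \<in> L j" "h + p i' \<in> L j'"
  then obtain m where "m < K" "h + p m \<notin> (\<Union>j\<in>J. L j)"
    using assms unfolding blocks_separate_def by blast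
  then show "\<exists>m<K. h + p m \<notin> (\<Union>j\<in>J'. L j)" using assms(2) by blast
qed

text \<open>The bits a block contributes to the sets \<open>F j\<close> are either all contributed to a single one,
  or they miss some position of the block and are then independent fair coins.\<close>

lemma block_factor_UN:
  assumes J: "finite J" and F: "\<And>j. j \<in> J \<Longrightarrow> F j \<subseteq> {..<K} \<times> L j"
    and disj: "disjoint_family_on L J"
    and sep: "blocks_separate K p L J"
  shows "block_factor K p (\<Union>j\<in>J. F j) S h = (\<Prod>j\<in>J. block_factor K p (F j) S h)"
proof -
  define g where "g U = measure_pmf.prob (even_word_pmf K) {v. \<forall>i\<in>U. v i \<in> S (i, h + p i)}" for U
  define P where "P j = block_positions p (F j) h" for j
  have PK: "P j \<subseteq> {..<K}" and PL: "\<And>i. i \<in> P j \<Longrightarrow> h + p i \<in> L j" if "j \<in> J" for j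
    using F[OF that] by (auto simp: P_def block_positions_def)
  have "g (\<Union>j\<in>J. P j) = (\<Prod>j\<in>J. g (P j))"
  proof (cases "\<exists>m<K. h + p m \<notin> (\<Union>j\<in>J. L j)")
    case True
    then obtain m where m: "m < K" "h + p m \<notin> (\<Union>j\<in>J. L j)" by blast
    then have mP: "m \<notin> P j" if "j \<in> J" for j using PL that by blast
    have disjP: "P j \<inter> P j' = {}" if "j \<in> J" "j' \<in> J" "j \<noteq> j'" for j j'
      using PL[OF that(1)] PL[OF that(2)] disj that unfolding disjoint_family_on_def by blast
    have "g (\<Union>j\<in>J. P j) = (\<Prod>i\<in>(\<Union>j\<in>J. P j). real (card (S (i, h + p i))) / 2)"
      unfolding g_def using PK mP m(1) by (intro prob_even_word_pmf_bits) auto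
    also have "\<dots> = (\<Prod>j\<in>J. \<Prod>i\<in>P j. real (card (S (i, h + p i))) / 2)"
      using J PK disjP by (intro prod.UNION_disjoint) (auto intro: finite_subset)
    also have "\<dots> = (\<Prod>j\<in>J. g (P j))"
      unfolding g_def using PK mP m(1) by (intro prod.cong refl prob_even_word_pmf_bits[symmetric]) auto
    finally show ?thesis .
  next
    case False
    have "\<exists>j0. \<forall>j\<in>J. j \<noteq> j0 \<longrightarrow> P j = {}"
    proof (cases "\<exists>j0\<in>J. P j0 \<noteq> {}")
      case True
      then obtain j0 i0 where j0: "j0 \<in> J" "i0 \<in> P j0" by blast
      have "P j = {}" if "j \<in> J" "j \<noteq> j0" for j
        using sep PL PK j0 that False unfolding blocks_separate_def by blast
      then show ?thesis by blast
    qed auto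
    then obtain j0 where j0: "\<And>j. j \<in> J \<Longrightarrow> j \<noteq> j0 \<Longrightarrow> P j = {}" by blast
    have g0: "g {} = 1" by (simp add: g_def)
    show ?thesis
    proof (cases "j0 \<in> J")
      case True
      then have "(\<Union>j\<in>J. P j) = P j0" using j0 by auto
      moreover have "(\<Prod>j\<in>J. g (P j)) = g (P j0)"
        using J True j0 g0 by (subst prod.remove[of J j0]) auto
      ultimately show ?thesis by simp
    next
      case False
      then have "P j = {}" if "j \<in> J" for j
        using j0 that by blast
      then show ?thesis using g0 by simp
    qed
  qed
  moreover have "block_positions p (\<Union>j\<in>J. F j) h = (\<Union>j\<in>J. P j)"
    by (auto simp: block_positions_def P_def)
  ultimately show ?thesis by (simp add: block_factor_def g_def P_def)
qed

lemma measure_bit_event_UN: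
  assumes J: "finite J" and F: "\<And>j. j \<in> J \<Longrightarrow> finite (F j)" "\<And>j. j \<in> J \<Longrightarrow> F j \<subseteq> {..<K} \<times> L j"
    and disj: "disjoint_family_on L J"
    and sep: "blocks_separate K p L J"
  shows "measure (block_field K) (bit_event K p (\<Union>j\<in>J. F j) S) =
    (\<Prod>j\<in>J. measure (block_field K) (bit_event K p (F j) S))"
proof -
  define H where "H = (\<lambda>(i, m). m - p i) ` (\<Union>j\<in>J. F j)"
  have H: "finite H" using J F(1) by (simp add: H_def)
  have "measure (block_field K) (bit_event K p (\<Union>j\<in>J. F j) S) =
      (\<Prod>h\<in>H. block_factor K p (\<Union>j\<in>J. F j) S h)"
    using F(2) by (intro measure_bit_event[OF H]) (force simp: H_def)+
  also have "\<dots> = (\<Prod>h\<in>H. \<Prod>j\<in>J. block_factor K p (F j) S h)"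
    by (intro prod.cong refl block_factor_UN[OF J F(2) disj sep])
  also have "\<dots> = (\<Prod>j\<in>J. \<Prod>h\<in>H. block_factor K p (F j) S h)"
    by (rule prod.swap)
  also have "\<dots> = (\<Prod>j\<in>J. measure (block_field K) (bit_event K p (F j) S))"
    using F(2) by (intro prod.cong refl measure_bit_event[OF H, symmetric]) (force simp: H_def)+
  finally show ?thesis .
qed

lemma indep_sets_bit_events:
  assumes disj: "disjoint_family_on L J"
    and sep: "blocks_separate K p L J"
  shows "prob_space.indep_sets (block_field K) (\<lambda>j. sigma_sets UNIV (bit_events K p (L j))) J"
proof -
  interpret prob_space "block_field K" by (rule prob_space_block_field)
  have "indep_sets (\<lambda>j. bit_events K p (L j)) J"
  proof (rule indep_setsI)
    fix A J' assume J': "J' \<noteq> {}" "J' \<subseteq> J" "finite J'" and A: "\<forall>j\<in>J'. A j \<in> bit_events K p (L j)"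
    then have "\<forall>j\<in>J'. \<exists>FS. A j = bit_event K p (fst FS) (snd FS) \<and> finite (fst FS) \<and> fst FS \<subseteq> {..<K} \<times> L j"
      by (force simp: bit_events_def)
    then have "\<exists>FS. \<forall>j\<in>J'. A j = bit_event K p (fst (FS j)) (snd (FS j)) \<and>
        finite (fst (FS j)) \<and> fst (FS j) \<subseteq> {..<K} \<times> L j"
      by (rule bchoice)
    then obtain FS where FS: "\<forall>j\<in>J'. A j = bit_event K p (fst (FS j)) (snd (FS j)) \<and>
        finite (fst (FS j)) \<and> fst (FS j) \<subseteq> {..<K} \<times> L j"
      by blast
    define F where "F j = fst (FS j)" for j
    define S where "S j = snd (FS j)" for j
    have FS: "A j = bit_event K p (F j) (S j) \<and> finite (F j) \<and> F j \<subseteq> {..<K} \<times> L j" if "j \<in> J'" for j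
      using FS that by (simp add: F_def S_def)
    define T where "T x = S (THE j. j \<in> J' \<and> x \<in> F j) x" for x
    have disj': "disjoint_family_on L J'" by (rule disjoint_family_on_mono[OF J'(2) disj])
    have T: "T x = S j x" if "j \<in> J'" "x \<in> F j" for j x
    proof -
      have "j' = j" if "j' \<in> J'" "x \<in> F j'" for j'
        using FS \<open>j \<in> J'\<close> \<open>x \<in> F j\<close> that disj' unfolding disjoint_family_on_def by blast
      then have "(THE j. j \<in> J' \<and> x \<in> F j) = j" using that by blast
      then show ?thesis by (simp add: T_def)
    qed
    have A_T: "A j = bit_event K p (F j) T" if "j \<in> J'" for j
      using FS[OF that] T[OF that] by (auto simp: bit_event_def)
    have "prob (\<Inter>j\<in>J'. A j) = prob (bit_event K p (\<Union>j\<in>J'. F j) T)"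
      using J'(1) A_T by (auto simp: bit_event_def intro!: arg_cong[where f=prob])
    also have "\<dots> = (\<Prod>j\<in>J'. prob (bit_event K p (F j) T))"
      using FS blocks_separate_subset[OF sep J'(2)] by (intro measure_bit_event_UN[OF J'(3) _ _ disj']) blast+
    also have "\<dots> = (\<Prod>j\<in>J'. prob (A j))"
      by (simp add: A_T)
    finally show "prob (\<Inter>j\<in>J'. A j) = (\<Prod>j\<in>J'. prob (A j))" .
  qed (rule bit_events_subset_sets)
  then show ?thesis
    using indep_sets_sigma[OF _ Int_stable_bit_events] by simp
qed

lemma vimage_spread_field:
  "spread_field K p k -` B = (\<Union>v\<in>{v \<in> PiE_dflt {..<K} False (\<lambda>_. UNIV). real_of_bits K v \<in> B}.
     bit_event K p ({..<K} \<times> {k}) (\<lambda>(i, _). {v i}))"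
proof (intro set_eqI iffI)
  fix \<omega> assume \<omega>: "\<omega> \<in> spread_field K p k -` B"
  define v where "v i = (i < K \<and> site_bit K p i k \<omega>)" for i
  have "real_of_bits K v = spread_field K p k \<omega>"
    by (simp add: spread_field_def real_of_bits_def v_def)
  then have "v \<in> {v \<in> PiE_dflt {..<K} False (\<lambda>_. UNIV). real_of_bits K v \<in> B}"
    using \<omega> by (auto simp: PiE_dflt_def v_def)
  moreover have "\<omega> \<in> bit_event K p ({..<K} \<times> {k}) (\<lambda>(i, _). {v i})"
    by (auto simp: bit_event_def v_def)
  ultimately show "\<omega> \<in> (\<Union>v\<in>{v \<in> PiE_dflt {..<K} False (\<lambda>_. UNIV). real_of_bits K v \<in> B}.
     bit_event K p ({..<K} \<times> {k}) (\<lambda>(i, _). {v i}))"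
    by blast
next
  fix \<omega> assume "\<omega> \<in> (\<Union>v\<in>{v \<in> PiE_dflt {..<K} False (\<lambda>_. UNIV). real_of_bits K v \<in> B}.
     bit_event K p ({..<K} \<times> {k}) (\<lambda>(i, _). {v i}))"
  then obtain v where v: "real_of_bits K v \<in> B" and \<omega>: "\<omega> \<in> bit_event K p ({..<K} \<times> {k}) (\<lambda>(i, _). {v i})"
    by auto
  have "spread_field K p k \<omega> = real_of_bits K v"
    using \<omega> by (auto simp: spread_field_def real_of_bits_def bit_event_def intro!: sum.cong)
  then show "\<omega> \<in> spread_field K p k -` B" using v by simp
qed

lemma sets_spread_sigma_subset:
  "sets (spread_sigma K p L) \<subseteq> sigma_sets UNIV (bit_events K p L)"
  unfolding sets_field_sigma space_block_field
proof (rule sigma_sets_mono, safe)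
  fix k and B :: "real set" assume k: "k \<in> L"
  have "finite (PiE_dflt {..<K} False (\<lambda>_. UNIV :: bool set))" by (intro finite_PiE_dflt) auto
  moreover have "bit_event K p ({..<K} \<times> {k}) (\<lambda>(i, _). {v i}) \<in> bit_events K p L" for v
    using k unfolding bit_events_def by blast
  ultimately show "spread_field K p k -` B \<inter> UNIV \<in> sigma_sets UNIV (bit_events K p L)"
    unfolding vimage_spread_field Int_UNIV_right
    by (intro sigma_sets_UNION countable_finite) auto
qed

lemma indep_sets_spread_sigma:
  assumes disj: "disjoint_family_on L J"
    and sep: "blocks_separate K p L J"
  shows "prob_space.indep_sets (block_field K) (\<lambda>j. sets (spread_sigma K p (L j))) J"
  using prob_space.indep_sets_mono_sets[OF prob_space_block_field indep_sets_bit_events[OF disj sep]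
      sets_spread_sigma_subset] .

lemma subalgebra_spread_sigma:
  "subalgebra (block_field K) (spread_sigma K p L)"
  by (rule subalgebra_field_sigma) simp

lemma tuplewise_indep_spread_field:
  fixes p :: "nat \<Rightarrow> 'g::ab_group_add"
  assumes p: "inj_on p {..<K}" and N: "N < K"
  shows "tuplewise_indep (block_field K) N (spread_field K p)"
  unfolding tuplewise_indep_def
proof (intro allI impI)
  fix Ks :: "'g set" assume Ks: "finite Ks \<and> card Ks = N"
  have outside: "\<exists>m<K. h + p m \<notin> Ks" for h
  proof (rule ccontr)
    assume "\<not> ?thesis"
    then have "(\<lambda>m. h + p m) ` {..<K} \<subseteq> Ks" by auto
    moreover have "inj_on (\<lambda>m. h + p m) {..<K}" using p by (simp add: inj_on_def)
    ultimately have "K \<le> card Ks" using Ks by (metis card_inj_on_le card_lessThan image_subset_iff_funcset)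
    then show False using Ks N by simp
  qed
  have "prob_space.indep_sets (block_field K)
      (\<lambda>k. sets (spread_sigma K p {k})) Ks"
  proof (rule indep_sets_spread_sigma)
    show "disjoint_family_on (\<lambda>k. {k}) Ks" by (simp add: disjoint_family_on_def)
    show "blocks_separate K p (\<lambda>k. {k}) Ks"
      using outside unfolding blocks_separate_def by blast
  qed
  then show "prob_space.indep_vars (block_field K) (\<lambda>_. borel) (spread_field K p) Ks"
    by (rule prob_space.indep_vars_if_indep_sets[OF prob_space_block_field])
      (auto intro: subalgebra_field_sigma measurable_field_sigma)
qed

section \<open>Correlations of the spread field\<close>

lemma max_corr_spread_sigma_le_1:
  "max_corr (block_field K) (spread_sigma K p S) (spread_sigma K p T) \<le> 1"
  by (intro max_corr_le_1 prob_space_block_field subalgebra_spread_sigma)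

lemma prob_block_bit_0:
  fixes h :: "'g::ab_group_add"
  assumes "2 \<le> K"
  shows "measure (block_field K) {\<omega>. block_bit K 0 (\<omega> h)} = 1 / 2"
proof -
  have "measure (block_field K) {\<omega>. block_bit K 0 (\<omega> h)} =
      measure (block_field K) (bit_event K (\<lambda>_. 0) {(0, h)} (\<lambda>_. {True}))"
    by (simp add: bit_event_def site_bit_def)
  also have "\<dots> = (\<Prod>h'\<in>{h}. block_factor K (\<lambda>_. 0) {(0, h)} (\<lambda>_. {True}) h')"
    using assms by (intro measure_bit_event) auto
  also have "\<dots> = measure_pmf.prob (even_word_pmf K) {v. \<forall>i\<in>{0}. v i \<in> {True}}"
    by (simp add: block_factor_def block_positions_def)
  also have "\<dots> = 1 / 2"
    using assms prob_even_word_pmf_bits[of "{0}" K 1 "\<lambda>_. {True}"] by simp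
  finally show ?thesis .
qed

lemma max_corr_spread_field_eq_1:
  assumes K: "2 \<le> K" and p0: "p 0 = 0" and S: "0 \<in> S" and T: "\<And>i. i \<in> {1..<K} \<Longrightarrow> p i \<in> T"
  shows "max_corr (block_field K) (spread_sigma K p S) (spread_sigma K p T) = 1"
proof (rule max_corr_eq_1_if_common_event[OF prob_space_block_field
      subalgebra_spread_sigma subalgebra_spread_sigma])
  let ?E = "{\<omega>. block_bit K 0 (\<omega> 0)}"
  have "?E = spread_field K p 0 -` {x. real_bit 0 x} \<inter> space (block_field K)"
    using K p0 by (auto simp: spread_field_def real_bit_real_of_bits site_bit_def)
  moreover have "{x. real_bit 0 x} \<in> sets borel"
    using measurable_sets[OF measurable_real_bit, of "{True}" 0] by (simp add: vimage_def)
  ultimately show "?E \<in> sets (spread_sigma K p S)"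
    unfolding sets_field_sigma using S by (intro sigma_sets.Basic) blast
  have "real_bit j (spread_field K p (p j) \<omega>) = real_bit j (\<omega> 0)" if "j \<in> {1..<K}" for j \<omega>
    using that by (simp add: spread_field_def real_bit_real_of_bits site_bit_def block_bit_def)
  then have "{j \<in> {1..<K}. real_bit j (spread_field K p (p j) \<omega>)} = {j. 1 \<le> j \<and> j < K \<and> real_bit j (\<omega> 0)}"
    for \<omega> by auto
  then have "?E = {\<omega> \<in> space (spread_sigma K p T).
      odd (card {j \<in> {1..<K}. real_bit j (spread_field K p (p j) \<omega>)})}"
    by (simp add: block_bit_def)
  moreover have "Measurable.pred (spread_sigma K p T)
      (\<lambda>\<omega>. odd (card {j \<in> {1..<K}. real_bit j (spread_field K p (p j) \<omega>)}))"
    by (intro pred_odd_card) (auto intro: measurable_compose[OF measurable_field_sigma[OF T] measurable_real_bit])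
  ultimately show "?E \<in> sets (spread_sigma K p T)"
    by (simp add: pred_def)
qed (simp_all add: prob_block_bit_0[OF K])

lemma max_corr_spread_field_eq_0:
  fixes p :: "nat \<Rightarrow> 'g::ab_group_add"
  assumes LR: "L \<inter> R = {}"
    and sep: "\<And>h i i'. i < K \<Longrightarrow> i' < K \<Longrightarrow> h + p i \<in> L \<Longrightarrow> h + p i' \<in> R \<Longrightarrow> \<exists>m<K. h + p m \<notin> L \<union> R"
  shows "max_corr (block_field K) (spread_sigma K p L) (spread_sigma K p R) = 0"
proof (rule max_corr_eq_0_if_indep[OF prob_space_block_field
      subalgebra_spread_sigma subalgebra_spread_sigma])
  have "prob_space.indep_sets (block_field K) (\<lambda>j. sets (spread_sigma K p (case_bool L R j))) UNIV"
  proof (rule indep_sets_spread_sigma)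
    show "disjoint_family_on (case_bool L R) UNIV"
      using LR by (auto simp: disjoint_family_on_def split: bool.split)
    have LR_UN: "(\<Union>j. case_bool L R j) = L \<union> R" by (auto simp: UNIV_bool)
    show "blocks_separate K p (case_bool L R) UNIV"
      unfolding blocks_separate_def
    proof (intro allI impI)
      fix h j j' i i'
      assume "j \<noteq> j'" "i < K" "i' < K" "h + p i \<in> case_bool L R j" "h + p i' \<in> case_bool L R j'"
      then have "\<exists>m<K. h + p m \<notin> L \<union> R" using sep by (cases j) auto
      then show "\<exists>m<K. h + p m \<notin> (\<Union>j\<in>UNIV. case_bool L R j)" by (simp add: LR_UN)
    qed
  qed
  moreover have "(\<lambda>j. sets (spread_sigma K p (case_bool L R j))) =
      case_bool (sets (spread_sigma K p L)) (sets (spread_sigma K p R))"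
    by (simp add: fun_eq_iff split: bool.split)
  ultimately show "prob_space.indep_set (block_field K) (sets (spread_sigma K p L))
      (sets (spread_sigma K p R))"
    by (simp add: prob_space.indep_set_def[OF prob_space_block_field])
qed

lemma abs_le_lat_norm: "\<bar>real_of_int (k u)\<bar> \<le> lat_norm k"
proof -
  have "(real_of_int (k u))\<^sup>2 \<le> (\<Sum>v\<in>UNIV. (real_of_int (k v))\<^sup>2)"
    by (rule member_le_sum) auto
  then show ?thesis
    unfolding lat_norm_def by (metis real_sqrt_abs real_sqrt_le_mono)
qed

lemma lat_norm_uminus: "lat_norm (\<lambda>u. - k u) = lat_norm k"
  by (simp add: lat_norm_def)

lemma lat_norm_zero: "lat_norm (0 :: 'd::finite \<Rightarrow> int) = 0"
  by (simp add: lat_norm_def)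

lemma rho_star_spread_field_eq_1:
  fixes p :: "nat \<Rightarrow> 'd::finite \<Rightarrow> int"
  assumes K: "2 \<le> K" and p0: "p 0 = 0" and n: "1 \<le> n"
    and far: "\<And>i. i \<in> {1..<K} \<Longrightarrow> real n \<le> lat_norm (p i)"
  shows "rho_star (block_field K) (spread_field K p) n = 1"
  unfolding rho_star_def
proof (rule cSup_eq_maximum)
  define T where "T = p ` {1..<K}"
  have "p i \<noteq> 0" if "i \<in> {1..<K}" for i
    using far[OF that] n by (auto simp: lat_norm_zero)
  then have "0 \<notin> T" by (auto simp: T_def)
  moreover have "T \<noteq> {}" using K by (auto simp: T_def)
  moreover have "real n \<le> lat_dist {0} T"
    unfolding lat_dist_def
  proof (rule cInf_greatest)
    show "{lat_norm (\<lambda>u. s u - t u) |s t. s \<in> {0} \<and> t \<in> T} \<noteq> {}"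
      using \<open>T \<noteq> {}\<close> by blast
  qed (auto simp: T_def lat_norm_uminus far)
  moreover have "max_corr (block_field K) (spread_sigma K p {0})
      (spread_sigma K p T) = 1"
    using K p0 by (intro max_corr_spread_field_eq_1) (auto simp: T_def)
  ultimately show "1 \<in> {max_corr (block_field K) (spread_sigma K p S)
      (spread_sigma K p T) |S T.
      S \<noteq> {} \<and> T \<noteq> {} \<and> S \<inter> T = {} \<and> real n \<le> lat_dist S T}"
    by (intro CollectI exI[of _ "{0}"] exI[of _ T]) auto
qed (auto intro: max_corr_spread_sigma_le_1)

lemma rho_half_1_spread_field_eq_1:
  fixes p :: "nat \<Rightarrow> 'd::finite \<Rightarrow> int"
  assumes K: "2 \<le> K" and p0: "p 0 = 0" and pos: "\<And>i. i \<in> {1..<K} \<Longrightarrow> 1 \<le> p i a"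
  shows "rho_half (block_field K) (spread_field K p) 1 = 1"
  unfolding rho_half_def
proof (rule cSup_eq_maximum)
  have "max_corr (block_field K) (spread_sigma K p {k. k a \<le> 0})
      (spread_sigma K p {k. 0 + int 1 \<le> k a}) = 1"
    using K p0 pos by (intro max_corr_spread_field_eq_1) auto
  then show "1 \<in> {max_corr (block_field K) (spread_sigma K p {k. k u \<le> j})
      (spread_sigma K p {k. j + int 1 \<le> k u}) |j u. True}"
    by (intro CollectI exI[of _ 0] exI[of _ a]) simp
qed (auto intro: max_corr_spread_sigma_le_1)

lemma rho_half_2_spread_field_eq_0:
  fixes p :: "nat \<Rightarrow> 'd::finite \<Rightarrow> int"
  assumes gapless: "\<And>u i i' t. i < K \<Longrightarrow> i' < K \<Longrightarrow> p i u < t \<Longrightarrow> t < p i' u \<Longrightarrow> \<exists>m<K. p m u = t"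
  shows "rho_half (block_field K) (spread_field K p) 2 = 0"
proof -
  have "max_corr (block_field K) (spread_sigma K p {k. k u \<le> j})
      (spread_sigma K p {k. j + int 2 \<le> k u}) = 0" for u j
  proof (rule max_corr_spread_field_eq_0)
    fix h :: "'d \<Rightarrow> int" and i i'
    assume "i < K" "i' < K" "h + p i \<in> {k. k u \<le> j}" "h + p i' \<in> {k. j + int 2 \<le> k u}"
    then obtain m where "m < K" "p m u = j + 1 - h u"
      using gapless[of i i' u "j + 1 - h u"] by auto
    then show "\<exists>m<K. h + p m \<notin> {k. k u \<le> j} \<union> {k. j + int 2 \<le> k u}"
      by auto
  qed auto
  then have "{max_corr (block_field K) (spread_sigma K p {k. k u \<le> j})
      (spread_sigma K p {k. j + int 2 \<le> k u}) |j u. True} = {0}"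
    by auto
  then show ?thesis unfolding rho_half_def by simp
qed

section \<open>The staircase block shape\<close>

definition stair_coords :: "nat \<Rightarrow> nat \<Rightarrow> int \<times> int" where
  "stair_coords R i =
    (if i = 0 then (0, 0) else if i \<le> R + 1 then (int R, int i - 1) else (int i - int R - 1, int R))"

definition stair :: "'d \<Rightarrow> 'd \<Rightarrow> nat \<Rightarrow> nat \<Rightarrow> 'd \<Rightarrow> int" where
  "stair a b R i u = (if u = a then fst (stair_coords R i) else if u = b then snd (stair_coords R i) else 0)"

lemma stair_0: "stair a b R 0 = 0"
  by (simp add: fun_eq_iff stair_def stair_coords_def)

lemma stair_a: "stair a b R i a = fst (stair_coords R i)"
  and stair_b: "a \<noteq> b \<Longrightarrow> stair a b R i b = snd (stair_coords R i)"
  by (simp_all add: stair_def)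

lemma inj_on_stair:
  assumes "a \<noteq> b"
  shows "inj_on (stair a b R) {..<2 * R + 1}"
proof (rule inj_onI)
  fix i j assume "i \<in> {..<2 * R + 1}" "j \<in> {..<2 * R + 1}" "stair a b R i = stair a b R j"
  moreover from this have "stair_coords R i = stair_coords R j"
    using assms by (metis prod_eq_iff stair_a stair_b)
  ultimately show "i = j"
    by (auto simp: stair_coords_def split: if_splits)
qed

lemma stair_a_pos:
  assumes "1 \<le> R" "i \<in> {1..<2 * R + 1}"
  shows "1 \<le> stair a b R i a"
  using assms by (auto simp: stair_a stair_coords_def)

lemma lat_norm_stair:
  fixes a b :: "'d::finite"
  assumes "a \<noteq> b" "i \<in> {1..<2 * R + 1}"
  shows "real R \<le> lat_norm (stair a b R i)"
proof -
  have "stair a b R i a = int R \<or> stair a b R i b = int R"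
    using assms by (auto simp: stair_a stair_b stair_coords_def)
  then show ?thesis
    by (metis abs_le_lat_norm abs_of_nat of_int_of_nat_eq)
qed

lemma stair_gapless:
  assumes "a \<noteq> b" "i < 2 * R + 1" "i' < 2 * R + 1" "stair a b R i u < t" "t < stair a b R i' u"
  shows "\<exists>m<2 * R + 1. stair a b R m u = t"
proof -
  consider "u = a" | "u = b" | "u \<noteq> a" "u \<noteq> b" by blast
  then show ?thesis
  proof cases
    case 1
    then have "1 \<le> t" "t \<le> int R - 1"
      using assms by (auto simp: stair_a stair_coords_def split: if_splits)
    then show ?thesis
      using 1 by (intro exI[of _ "nat t + R + 1"]) (auto simp: stair_a stair_coords_def)
  next
    case 2
    then have "1 \<le> t" "t \<le> int R - 1"
      using assms by (auto simp: stair_b stair_coords_def split: if_splits)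
    then show ?thesis
      using 2 assms(1) by (intro exI[of _ "nat t + 1"]) (auto simp: stair_b stair_coords_def)
  next
    case 3
    then show ?thesis using assms by (simp add: stair_def)
  qed
qed

theorem lemma4p1:
  fixes N n :: nat
  assumes "CARD('d::finite) \<ge> 2" and "N \<ge> 2" and "n \<ge> 1"
  shows "\<exists>(M :: ((('d \<Rightarrow> int) \<Rightarrow> real) measure)) (X :: ('d \<Rightarrow> int) \<Rightarrow> (('d \<Rightarrow> int) \<Rightarrow> real) \<Rightarrow> real).
           prob_space M \<and> (\<forall>k. X k \<in> borel_measurable M) \<and>
           strictly_stationary M X \<and> tuplewise_indep M N X \<and>
           rho_star M X n = 1 \<and> rho_half M X 1 = 1 \<and> rho_half M X 2 = 0"
proof -
  have "\<not> CARD('d) \<le> Suc 0" using assms(1) by simp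
  then obtain a b :: 'd where ab: "a \<noteq> b"
    by (auto simp: card_le_Suc0_iff_eq)
  define R where "R = n + N"
  define K where "K = 2 * R + 1"
  have R: "1 \<le> R" "n \<le> R" "N < K" "2 \<le> K"
    using assms by (auto simp: R_def K_def)
  let ?p = "stair a b R"
  have tuplewise: "tuplewise_indep (block_field K) N (spread_field K ?p)"
    using inj_on_stair[OF ab] R(3) unfolding K_def by (rule tuplewise_indep_spread_field)
  have "real n \<le> lat_norm (?p i)" if "i \<in> {1..<K}" for i
    using lat_norm_stair[OF ab, of i R] that R(2) by (simp add: K_def)
  then have rho_star: "rho_star (block_field K) (spread_field K ?p) n = 1"
    using R(4) assms(3) by (intro rho_star_spread_field_eq_1) (simp_all add: stair_0)
  have rho_half_1: "rho_half (block_field K) (spread_field K ?p) 1 = 1"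
    using R(1,4) stair_a_pos[OF R(1)] by (intro rho_half_1_spread_field_eq_1) (simp_all add: stair_0 K_def)
  have rho_half_2: "rho_half (block_field K) (spread_field K ?p) 2 = 0"
    using stair_gapless[OF ab] unfolding K_def by (intro rho_half_2_spread_field_eq_0)
  show ?thesis
    by (intro exI[of _ "block_field K"] exI[of _ "spread_field K ?p"] conjI allI prob_space_block_field
        measurable_spread_field strictly_stationary_spread_field tuplewise rho_star rho_half_1 rho_half_2)
qed

end
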